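(* Let $\alpha,\beta$ be $H$-colorings of $G$ and $q\in V(G)$. If $Q\in\pi(H)$ is realizable for $\alpha,\beta,q$, then $Q$ is topologically valid for $\alpha,\beta,q$.
   Context: All graphs are finite and undirected. $G$ is a connected loopless graph with at least one edge. $H$ is a connected graph with at least one edge, possibly with loops, having the monochromatic neighborhood property: for all $a,b\in V(H)$, $|N_H(a)\cap N_H(b)|\le 1$, where $N_H(a)=\{w: aw\in E(H)\}$. An $H$-coloring of $G$ is a map $\sigma:V(G)\to V(H)$ such that $uv\in E(G)$ implies $\sigma(u)\sigma(v)\in E(H)$. An $H$-recoloring sequence is a sequence $\sigma_0,\dots,\sigma_l$ of $H$-colorings of $G$ in which consecutive colorings differ in the color of exactly one vertex. Walks: an oriented edge is an ordered pair $(x,y)$ with $xy$ an edge; $(x,y)^{-1}=(y,x)$. A walk from $x$ to $y$ is a sequence of oriented edges, consecutive ones sharing endpoints, starting at $x$ and ending at $y$; $\varepsilon$ is the empty walk; $W^{-1}$ the reversed walk; $W_1W_2$ concatenation. A walk is reduced if no two consecutive edges $e_ie_{i+1}$ satisfy $e_{i+1}=e_i^{-1}$; $\overline{W}$ is the unique reduced walk obtained by repeatedly deleting such pairs. $A\cdot B:=\overline{AB}$ for reduced $A,B$ with $B$ starting where $A$ ends. $\pi(H)$ is the set of reduced walks in $H$. For a walk $W=(x_0,x_1)\dots(x_{k-1},x_k)$ in $G$, $\alpha(W)=(\alpha(x_0),\alpha(x_1))\dots(\alpha(x_{k-1}),\alpha(x_k))$. Vertex walks: in a one-step sequence $\sigma_0,\sigma_1$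 where vertex $w$ changes from $a$ to $b\ne a$, all neighbors of $w$ have a common color $h$ (the unique element of $N_H(a)\cap N_H(b)$); set $S(w)=(a,h)(h,b)$ and $S(v)=\varepsilon$ for $v\ne w$. For the empty sequence $S(v)=\varepsilon$; for longer sequences $S(v)$ is the concatenation of the one-step walks in order. Realizable: $Q\in\pi(H)$ is realizable for $\alpha,\beta,q$ if there is an $H$-recoloring sequence $S=\sigma_0,\dots,\sigma_l$ with $\sigma_0=\alpha$, $\sigma_l=\beta$, $\overline{S(q)}=Q$. Topologically valid: a reduced walk $Q$ in $H$ from $\alpha(q)$ to $\beta(q)$ is topologically valid for $\alpha,\beta,q$ if for every closed walk $C$ in $G$ from $q$ to $q$, $\overline{\beta(C)}=Q^{-1}\cdot\overline{\alpha(C)}\cdot Q$. *)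

theory Defs
  imports Main
begin

(* Graphs: vertex set = the (finite) universe of the vertex type; edges given by a
   symmetric relation E.  Oriented edges are pairs; walks are lists of oriented edges. *)

type_synonym 'a oedge = "'a \<times> 'a"
type_synonym 'a walk = "'a oedge list"

definition sym_graph :: "('a \<Rightarrow> 'a \<Rightarrow> bool) \<Rightarrow> bool" where
  "sym_graph E \<longleftrightarrow> (\<forall>x y. E x y \<longrightarrow> E y x)"

definition loopless :: "('a \<Rightarrow> 'a \<Rightarrow> bool) \<Rightarrow> bool" where
  "loopless E \<longleftrightarrow> (\<forall>x. \<not> E x x)"

definition connected_graph :: "('a \<Rightarrow> 'a \<Rightarrow> bool) \<Rightarrow> bool" where
  "connected_graph E \<longleftrightarrow> (\<forall>x y. E\<^sup>*\<^sup>* x y)"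

definition has_edge :: "('a \<Rightarrow> 'a \<Rightarrow> bool) \<Rightarrow> bool" where
  "has_edge E \<longleftrightarrow> (\<exists>x y. E x y)"

definition nbhd :: "('a \<Rightarrow> 'a \<Rightarrow> bool) \<Rightarrow> 'a \<Rightarrow> 'a set" where
  "nbhd E a = {w. E a w}"

definition mono_nbhd :: "('a \<Rightarrow> 'a \<Rightarrow> bool) \<Rightarrow> bool" where
  "mono_nbhd E \<longleftrightarrow> (\<forall>a b. a \<noteq> b \<longrightarrow> card (nbhd E a \<inter> nbhd E b) \<le> 1)"

definition hom :: "('v \<Rightarrow> 'v \<Rightarrow> bool) \<Rightarrow> ('h \<Rightarrow> 'h \<Rightarrow> bool) \<Rightarrow> ('v \<Rightarrow> 'h) \<Rightarrow> bool" where
  "hom EG EH \<sigma> \<longleftrightarrow> (\<forall>u v. EG u v \<longrightarrow> EH (\<sigma> u) (\<sigma> v))"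

inductive walk :: "('a \<Rightarrow> 'a \<Rightarrow> bool) \<Rightarrow> 'a \<Rightarrow> 'a walk \<Rightarrow> 'a \<Rightarrow> bool" for E where
  walk_Nil: "walk E x [] x"
| walk_Cons: "E x z \<Longrightarrow> walk E z W y \<Longrightarrow> walk E x ((x, z) # W) y"

definition inv_edge :: "'a oedge \<Rightarrow> 'a oedge" where
  "inv_edge e = (snd e, fst e)"

definition inv_walk :: "'a walk \<Rightarrow> 'a walk" where
  "inv_walk W = rev (map inv_edge W)"

definition reduced :: "'a walk \<Rightarrow> bool" where
  "reduced W \<longleftrightarrow> (\<forall>i. Suc i < length W \<longrightarrow> W ! Suc i \<noteq> inv_edge (W ! i))"

inductive del_step :: "'a walk \<Rightarrow> 'a walk \<Rightarrow> bool" where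
  "del_step (A @ [e, inv_edge e] @ B) (A @ B)"

definition reduce :: "'a walk \<Rightarrow> 'a walk" where
  "reduce W = (THE R. reduced R \<and> del_step\<^sup>*\<^sup>* W R)"

definition wprod :: "'a walk \<Rightarrow> 'a walk \<Rightarrow> 'a walk" (infixl "\<cdot>" 70) where
  "A \<cdot> B = reduce (A @ B)"

definition reduced_walks :: "('a \<Rightarrow> 'a \<Rightarrow> bool) \<Rightarrow> 'a walk set" where
  "reduced_walks E = {W. reduced W \<and> (\<exists>x y. walk E x W y)}"

definition map_walk :: "('v \<Rightarrow> 'h) \<Rightarrow> 'v walk \<Rightarrow> 'h walk" where
  "map_walk \<alpha> W = map (\<lambda>(x, y). (\<alpha> x, \<alpha> y)) W"

definition recoloring_seq ::
  "('v \<Rightarrow> 'v \<Rightarrow> bool) \<Rightarrow> ('h \<Rightarrow> 'h \<Rightarrow> bool) \<Rightarrow> ('v \<Rightarrow> 'h) list \<Rightarrow> bool" where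
  "recoloring_seq EG EH S \<longleftrightarrow> S \<noteq> [] \<and> (\<forall>\<sigma>\<in>set S. hom EG EH \<sigma>) \<and>
     (\<forall>i. Suc i < length S \<longrightarrow> (\<exists>!w. (S ! i) w \<noteq> (S ! Suc i) w))"

definition step_walk ::
  "('h \<Rightarrow> 'h \<Rightarrow> bool) \<Rightarrow> ('v \<Rightarrow> 'h) \<Rightarrow> ('v \<Rightarrow> 'h) \<Rightarrow> 'v \<Rightarrow> 'h walk" where
  "step_walk EH \<sigma>0 \<sigma>1 v =
     (if \<sigma>0 v = \<sigma>1 v then []
      else (let a = \<sigma>0 v; b = \<sigma>1 v; h = (THE h. h \<in> nbhd EH a \<inter> nbhd EH b)
            in [(a, h), (h, b)]))"

fun vertex_walk :: "('h \<Rightarrow> 'h \<Rightarrow> bool) \<Rightarrow> ('v \<Rightarrow> 'h) list \<Rightarrow> 'v \<Rightarrow> 'h walk" where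
  "vertex_walk EH (\<sigma>0 # \<sigma>1 # S) v = step_walk EH \<sigma>0 \<sigma>1 v @ vertex_walk EH (\<sigma>1 # S) v"
| "vertex_walk EH _ v = []"

definition realizable ::
  "('v \<Rightarrow> 'v \<Rightarrow> bool) \<Rightarrow> ('h \<Rightarrow> 'h \<Rightarrow> bool) \<Rightarrow> 'h walk \<Rightarrow> ('v \<Rightarrow> 'h) \<Rightarrow> ('v \<Rightarrow> 'h) \<Rightarrow> 'v \<Rightarrow> bool" where
  "realizable EG EH Q \<alpha> \<beta> q \<longleftrightarrow>
     (\<exists>S. recoloring_seq EG EH S \<and> hd S = \<alpha> \<and> last S = \<beta> \<and> reduce (vertex_walk EH S q) = Q)"

definition topologically_valid ::
  "('v \<Rightarrow> 'v \<Rightarrow> bool) \<Rightarrow> ('h \<Rightarrow> 'h \<Rightarrow> bool) \<Rightarrow> 'h walk \<Rightarrow> ('v \<Rightarrow> 'h) \<Rightarrow> ('v \<Rightarrow> 'h) \<Rightarrow> 'v \<Rightarrow> bool" where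
  "topologically_valid EG EH Q \<alpha> \<beta> q \<longleftrightarrow>
     reduced Q \<and> walk EH (\<alpha> q) Q (\<beta> q) \<and>
     (\<forall>C. walk EG q C q \<longrightarrow>
        reduce (map_walk \<beta> C) = (inv_walk Q \<cdot> reduce (map_walk \<alpha> C)) \<cdot> Q)"

end

theory Submission
  imports Defs
begin

(* Two walks are homotopic if they have the same free reduction; this
   is a congruence for concatenation and inversion, and W @ W^{-1} is null-homotopic.
   First, reduction is made computable: pushing edges one by one onto a reduced walk
   (cancelling against the head) yields a reduced walk reachable by deletions, and
   since it is invariant under deletions it is the unique one, i.e. equals reduce.
   Second, a single recoloring step sigma0 -> sigma1 that changes vertex w through the
   common neighbour colour h satisfies, for every edge uv of G,
       sigma1(u)sigma1(v)  ~  S(u)^{-1} sigma0(u)sigma0(v) S(v)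
   (only u = w or v = w is nontrivial, and then one backtrack cancels).  Chaining
   along a walk C from x to y gives sigma1(C) ~ S(x)^{-1} sigma0(C) S(y); an induction
   over the recoloring sequence gives beta(C) ~ P(x)^{-1} alpha(C) P(y) for the
   concatenated vertex walks P, which are walks in H.  For a closed walk at q and
   Q = reduce P(q) this is exactly topological validity. *)

section \<open>Computing free reduction\<close>

lemma inv_edge_inv_edge [simp]: "inv_edge (inv_edge e) = e"
  by (simp add: inv_edge_def)

fun cancel_cons :: "'a oedge \<Rightarrow> 'a walk \<Rightarrow> 'a walk" where
  "cancel_cons e [] = [e]"
| "cancel_cons e (f # R) = (if f = inv_edge e then R else e # f # R)"

fun red :: "'a walk \<Rightarrow> 'a walk" where
  "red [] = []"
| "red (e # W) = cancel_cons e (red W)"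

lemma reduced_Nil [simp]: "reduced []" and reduced_single [simp]: "reduced [e]"
  by (auto simp: reduced_def)

lemma reduced_Cons2 [simp]:
  "reduced (e # f # R) \<longleftrightarrow> f \<noteq> inv_edge e \<and> reduced (f # R)"
proof
  assume r: "reduced (e # f # R)"
  have "reduced (f # R)"
    unfolding reduced_def using r[unfolded reduced_def, rule_format, of "Suc _"] by simp
  then show "f \<noteq> inv_edge e \<and> reduced (f # R)"
    using r[unfolded reduced_def, rule_format, of 0] by simp
next
  assume a: "f \<noteq> inv_edge e \<and> reduced (f # R)"
  show "reduced (e # f # R)" unfolding reduced_def
  proof (intro allI impI)
    fix i assume i: "Suc i < length (e # f # R)"
    show "(e # f # R) ! Suc i \<noteq> inv_edge ((e # f # R) ! i)"
      using a a[THEN conjunct2, unfolded reduced_def, rule_format, of "i - 1"] i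
      by (cases i) auto
  qed
qed

lemma reduced_tl: "reduced (e # R) \<Longrightarrow> reduced R"
  by (cases R) auto

lemma reduced_cancel_cons: "reduced R \<Longrightarrow> reduced (cancel_cons e R)"
  by (cases R) (auto dest: reduced_tl)

lemma reduced_red: "reduced (red W)"
  by (induction W) (auto intro: reduced_cancel_cons)

lemma cancel_cons_inverse: "reduced R \<Longrightarrow> cancel_cons e (cancel_cons (inv_edge e) R) = R"
  by (cases R rule: remdups_adj.cases) auto \<comment> \<open>cases: [], [f], f # g # R\<close>

lemma red_append: "red (A @ B) = foldr cancel_cons A (red B)"
  by (induction A) auto

lemma red_reduced: "reduced R \<Longrightarrow> red R = R"
proof (induction R)
  case (Cons e R)
  then have "red R = R" using reduced_tl by blast
  then show ?case using Cons.prems by (cases R) auto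
qed simp

lemma del_step_context: "del_step W W' \<Longrightarrow> del_step (X @ W @ Z) (X @ W' @ Z)"
  by (induction rule: del_step.induct) (metis append.assoc del_step.intros)

lemma del_steps_context: "del_step\<^sup>*\<^sup>* W W' \<Longrightarrow> del_step\<^sup>*\<^sup>* (X @ W @ Z) (X @ W' @ Z)"
  by (induction rule: rtranclp_induct) (auto intro: rtranclp.rtrancl_into_rtrancl del_step_context)

text \<open>red is invariant under deleting a backtrack; this is what makes reduction unique.\<close>
lemma red_del_step: "del_step W W' \<Longrightarrow> red W = red W'"
proof (induction rule: del_step.induct)
  case (1 A e B)
  have "red ([e, inv_edge e] @ B) = red B"
    using cancel_cons_inverse[OF reduced_red[of B], of e] by simp
  then show ?case by (simp add: red_append)
qed

lemma red_del_steps: "del_step\<^sup>*\<^sup>* W W' \<Longrightarrow> red W = red W'"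
  by (induction rule: rtranclp_induct) (auto dest: red_del_step)

lemma del_steps_red: "del_step\<^sup>*\<^sup>* W (red W)"
proof (induction W)
  case Nil then show ?case by simp
next
  case (Cons e W)
  have to_red: "del_step\<^sup>*\<^sup>* (e # W) (e # red W)"
    using del_steps_context[OF Cons, of "[e]" "[]"] by simp
  show ?case
  proof (cases "red W")
    case (Cons f R)
    moreover have "del_step ([] @ [e, inv_edge e] @ R) ([] @ R)" by (rule del_step.intros)
    ultimately show ?thesis using to_red by (auto intro: rtranclp.rtrancl_into_rtrancl)
  qed (use to_red in simp)
qed

lemma reduce_eq_red: "reduce W = red W"
  unfolding reduce_def
proof (rule the_equality)
  show "reduced (red W) \<and> del_step\<^sup>*\<^sup>* W (red W)" using reduced_red del_steps_red by blast
next
  fix R assume "reduced R \<and> del_step\<^sup>*\<^sup>* W R"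
  then show "R = red W" using red_del_steps red_reduced by metis
qed

section \<open>Homotopy of walks\<close>

text \<open>Homotopy: equality after free reduction (the free groupoid on the oriented edges).\<close>
definition homotopic :: "'a walk \<Rightarrow> 'a walk \<Rightarrow> bool" (infix "\<simeq>" 50) where
  "A \<simeq> B \<longleftrightarrow> red A = red B"

lemma homotopic_refl [simp]: "A \<simeq> A"
  by (simp add: homotopic_def)

lemma homotopic_sym: "A \<simeq> B \<Longrightarrow> B \<simeq> A"
  by (simp add: homotopic_def)

lemma homotopic_trans [trans]: "A \<simeq> B \<Longrightarrow> B \<simeq> C \<Longrightarrow> A \<simeq> C"
  by (simp add: homotopic_def)

lemma red_homotopic: "red W \<simeq> W"
  by (simp add: homotopic_def red_reduced reduced_red)

lemma wprod_homotopic: "A \<cdot> B \<simeq> A @ B"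
  by (simp add: wprod_def reduce_eq_red red_homotopic)

lemma red_reduce_segment: "red (X @ Y @ Z) = red (X @ red Y @ Z)"
  by (rule red_del_steps[OF del_steps_context[OF del_steps_red]])

lemma homotopic_append:
  assumes "A \<simeq> A'" "B \<simeq> B'"
  shows "A @ B \<simeq> A' @ B'"
proof -
  have "red (A @ B) = red (red A @ red B)"
    using red_reduce_segment[of "[]" A B] red_reduce_segment[of "red A" B "[]"] by simp
  also have "\<dots> = red (A' @ B')"
    using assms red_reduce_segment[of "[]" A' B'] red_reduce_segment[of "red A'" B' "[]"]
    by (simp add: homotopic_def)
  finally show ?thesis by (simp add: homotopic_def)
qed

lemma homotopic_cancel: "A @ [e, inv_edge e] @ B \<simeq> A @ B"
  by (simp only: homotopic_def red_del_step del_step.intros)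

lemma inv_walk_Nil [simp]: "inv_walk [] = []"
  by (simp add: inv_walk_def)

lemma inv_walk_inv_walk [simp]: "inv_walk (inv_walk W) = W"
  by (simp add: inv_walk_def rev_map comp_def)

lemma inv_walk_append [simp]: "inv_walk (A @ B) = inv_walk B @ inv_walk A"
  by (simp add: inv_walk_def)

lemma homotopic_append_right_inverse: "W @ inv_walk W \<simeq> []"
proof (induction W)
  case (Cons e W)
  have "(e # W) @ inv_walk (e # W) = [e] @ (W @ inv_walk W) @ [inv_edge e]"
    by (simp add: inv_walk_def)
  also have "\<dots> \<simeq> [e] @ [] @ [inv_edge e]"
    by (intro homotopic_append Cons homotopic_refl)
  also have "\<dots> \<simeq> []" using homotopic_cancel[of "[]" e "[]"] by simp
  finally show ?case .
qed simp

lemma homotopic_append_left_inverse: "inv_walk W @ W \<simeq> []"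
  using homotopic_append_right_inverse[of "inv_walk W"] by simp

lemma homotopic_drop_null: "B \<simeq> [] \<Longrightarrow> A @ B @ C \<simeq> A @ C"
  using homotopic_append[OF homotopic_refl homotopic_append[OF _ homotopic_refl]] by fastforce

lemma homotopic_inv_walk:
  assumes "A \<simeq> B"
  shows "inv_walk A \<simeq> inv_walk B"
proof -
  have "inv_walk A \<simeq> inv_walk A @ B @ inv_walk B"
    using homotopic_drop_null[OF homotopic_append_right_inverse, of "inv_walk A" B "[]"]
    by (simp add: homotopic_sym)
  also have "\<dots> \<simeq> inv_walk A @ A @ inv_walk B"
    by (intro homotopic_append homotopic_refl homotopic_sym[OF assms])
  also have "\<dots> \<simeq> inv_walk B"
    using homotopic_drop_null[OF homotopic_append_left_inverse, of "[]" A] by simp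
  finally show ?thesis .
qed

lemma walk_Cons_iff: "walk E x ((a, b) # W) y \<longleftrightarrow> a = x \<and> E x b \<and> walk E b W y"
  by (auto elim: walk.cases intro: walk.intros)

lemma walk_Nil_iff [simp]: "walk E x [] y \<longleftrightarrow> x = y"
  by (auto elim: walk.cases intro: walk.intros)

lemma walk_append: "walk E x (A @ B) y \<longleftrightarrow> (\<exists>z. walk E x A z \<and> walk E z B y)"
  by (induction A arbitrary: x) (auto simp: walk_Cons_iff)

lemma walk_del_step: "del_step W W' \<Longrightarrow> walk E x W y \<Longrightarrow> walk E x W' y"
  by (induction rule: del_step.induct) (auto simp: walk_append walk_Cons_iff inv_edge_def)

lemma walk_red: "walk E x W y \<Longrightarrow> walk E x (red W) y"
proof -
  have "del_step\<^sup>*\<^sup>* W W' \<Longrightarrow> walk E x W y \<Longrightarrow> walk E x W' y" for W'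
    by (induction rule: rtranclp_induct) (auto intro: walk_del_step)
  then show "walk E x W y \<Longrightarrow> walk E x (red W) y" using del_steps_red by blast
qed

lemma connected_has_neighbour:
  assumes "connected_graph E" "has_edge E"
  shows "\<exists>z. E x z"
proof -
  obtain a b where ab: "E a b" using assms(2) by (auto simp: has_edge_def)
  have "E\<^sup>*\<^sup>* x a" using assms(1) by (simp add: connected_graph_def)
  then show ?thesis using ab by (cases "x = a") (auto elim: converse_rtranclpE)
qed

lemma the_common_neighbour:
  fixes E :: "'h::finite \<Rightarrow> 'h \<Rightarrow> bool"
  assumes "mono_nbhd E" "a \<noteq> b" "E a c" "E b c"
  shows "(THE h. h \<in> nbhd E a \<inter> nbhd E b) = c"
proof (rule the_equality)
  show c: "c \<in> nbhd E a \<inter> nbhd E b" using assms by (simp add: nbhd_def)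
  fix h assume "h \<in> nbhd E a \<inter> nbhd E b"
  moreover have "card (nbhd E a \<inter> nbhd E b) \<le> Suc 0"
    using assms(1,2) by (simp add: mono_nbhd_def)
  ultimately show "h = c" using c card_le_Suc0_iff_eq[of "nbhd E a \<inter> nbhd E b"] by auto
qed

section \<open>One recoloring step\<close>

locale recoloring_setting =
  fixes EG :: "'v \<Rightarrow> 'v \<Rightarrow> bool" and EH :: "'h::finite \<Rightarrow> 'h \<Rightarrow> bool"
  assumes symG: "sym_graph EG" and loopG: "loopless EG" and symH: "sym_graph EH"
    and mono: "mono_nbhd EH" and neighbour: "\<And>x. \<exists>z. EG x z"

locale recoloring_step = recoloring_setting +
  fixes s0 s1 :: "'v \<Rightarrow> 'h::finite"
  assumes hom0: "hom EG EH s0" and hom1: "hom EG EH s1"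
    and changes_one: "\<And>x y. s0 x \<noteq> s1 x \<Longrightarrow> s0 y \<noteq> s1 y \<Longrightarrow> x = y"
begin

abbreviation T :: "'v \<Rightarrow> 'h walk" where "T \<equiv> step_walk EH s0 s1"

text \<open>The recolored vertex moves through the (old = new) colour of any of its neighbours.\<close>
lemma step_walk_changed:
  assumes "EG u v" "s0 u \<noteq> s1 u"
  shows "T u = [(s0 u, s0 v), (s0 v, s1 u)]" and "s0 v = s1 v"
proof -
  have "u \<noteq> v" using assms(1) loopG by (auto simp: loopless_def)
  then show sv: "s0 v = s1 v" using changes_one[of u v] assms(2) by blast
  have "EH (s0 u) (s0 v)" using hom0 assms(1) by (simp add: hom_def)
  moreover have "EH (s1 u) (s0 v)" using hom1 assms(1) sv by (simp add: hom_def)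
  ultimately
  have "(THE h. h \<in> nbhd EH (s0 u) \<inter> nbhd EH (s1 u)) = s0 v"
    using the_common_neighbour[OF mono assms(2)] by blast
  then show "T u = [(s0 u, s0 v), (s0 v, s1 u)]"
    using assms(2) by (simp add: step_walk_def Let_def)
qed

lemma step_walk_unchanged: "s0 u = s1 u \<Longrightarrow> T u = []"
  by (simp add: step_walk_def)

lemma step_walk_is_walk: "walk EH (s0 x) (T x) (s1 x)"
proof (cases "s0 x = s1 x")
  case False
  obtain z where z: "EG x z" using neighbour by blast
  note T = step_walk_changed[OF z False]
  have "EH (s0 x) (s0 z)" using hom0 z by (simp add: hom_def)
  moreover have "EH (s1 x) (s0 z)" using hom1 z T(2) by (simp add: hom_def)
  ultimately show ?thesis using T(1) symH by (simp add: walk_Cons_iff sym_graph_def)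
qed (simp add: step_walk_unchanged)

lemma edge_homotopy:
  assumes "EG u v"
  shows "[(s1 u, s1 v)] \<simeq> inv_walk (T u) @ [(s0 u, s0 v)] @ T v"
proof (cases "s0 u = s1 u")
  case False
  note T = step_walk_changed[OF assms False]
  have "[(s1 u, s0 v)] @ [(s0 v, s0 u), inv_edge (s0 v, s0 u)] @ [] \<simeq> [(s1 u, s0 v)] @ []"
    by (rule homotopic_cancel)
  then show ?thesis using T by (simp add: inv_walk_def inv_edge_def step_walk_unchanged homotopic_sym)
next
  case True
  show ?thesis
  proof (cases "s0 v = s1 v")
    case False
    have "EG v u" using assms symG by (simp add: sym_graph_def)
    note T = step_walk_changed[OF this False]
    have "[] @ [(s0 u, s0 v), inv_edge (s0 u, s0 v)] @ [(s0 u, s1 v)] \<simeq> [] @ [(s0 u, s1 v)]"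
      by (rule homotopic_cancel)
    then show ?thesis
      using T True step_walk_unchanged[OF True] by (simp add: inv_edge_def homotopic_sym)
  qed (use True step_walk_unchanged in simp)
qed

lemma walk_homotopy:
  "walk EG x C y \<Longrightarrow> map_walk s1 C \<simeq> inv_walk (T x) @ map_walk s0 C @ T y"
proof (induction rule: walk.induct)
  case (walk_Nil x)
  then show ?case by (simp add: map_walk_def homotopic_sym[OF homotopic_append_left_inverse])
next
  case (walk_Cons x z W y)
  have "map_walk s1 ((x, z) # W) = [(s1 x, s1 z)] @ map_walk s1 W"
    by (simp add: map_walk_def)
  also have "\<dots> \<simeq> (inv_walk (T x) @ [(s0 x, s0 z)] @ T z) @ (inv_walk (T z) @ map_walk s0 W @ T y)"
    by (rule homotopic_append[OF edge_homotopy[OF walk_Cons.hyps(1)] walk_Cons.IH])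
  also have "\<dots> = (inv_walk (T x) @ [(s0 x, s0 z)]) @ (T z @ inv_walk (T z)) @ (map_walk s0 W @ T y)"
    by simp
  also have "\<dots> \<simeq> inv_walk (T x) @ map_walk s0 ((x, z) # W) @ T y"
    using homotopic_drop_null[OF homotopic_append_right_inverse,
        of "inv_walk (T x) @ [(s0 x, s0 z)]" "T z" "map_walk s0 W @ T y"]
    by (simp add: map_walk_def)
  finally show ?case .
qed

end

section \<open>Recoloring sequences\<close>

lemma recoloring_seq_Cons2:
  assumes "recoloring_seq EG EH (s0 # s1 # S)"
  shows "recoloring_seq EG EH (s1 # S)" and "hom EG EH s0" and "hom EG EH s1"
    and "\<exists>!w. s0 w \<noteq> s1 w"
proof -
  have steps: "\<And>i. Suc i < length (s0 # s1 # S) \<Longrightarrow>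
      \<exists>!w. ((s0 # s1 # S) ! i) w \<noteq> ((s0 # s1 # S) ! Suc i) w"
    using assms by (simp add: recoloring_seq_def)
  show "\<exists>!w. s0 w \<noteq> s1 w" using steps[of 0] by simp
  show "recoloring_seq EG EH (s1 # S)"
    using assms steps[of "Suc _"] by (simp add: recoloring_seq_def)
  show "hom EG EH s0" "hom EG EH s1" using assms by (simp_all add: recoloring_seq_def)
qed

context recoloring_setting
begin

lemma recoloring_step_of_seq:
  assumes "recoloring_seq EG EH (s0 # s1 # S)"
  shows "recoloring_step EG EH s0 s1"
proof unfold_locales
  show "hom EG EH s0" "hom EG EH s1" using recoloring_seq_Cons2(2,3)[OF assms] .
  show "x = y" if "s0 x \<noteq> s1 x" "s0 y \<noteq> s1 y" for x y
    using recoloring_seq_Cons2(4)[OF assms] that by blast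
qed

lemma vertex_walk_is_walk:
  "recoloring_seq EG EH S \<Longrightarrow> walk EH (hd S x) (vertex_walk EH S x) (last S x)"
proof (induction S rule: induct_list012)
  case (3 s0 s1 S)
  interpret recoloring_step EG EH s0 s1 using recoloring_step_of_seq[OF "3.prems"] .
  have "walk EH (s1 x) (vertex_walk EH (s1 # S) x) (last (s1 # S) x)"
    using "3.IH"(2) recoloring_seq_Cons2(1)[OF "3.prems"] by simp
  then show ?case using step_walk_is_walk[of x] by (auto simp: walk_append)
qed (simp_all add: recoloring_seq_def)

lemma vertex_walk_homotopy:
  assumes "walk EG x C y"
  shows "recoloring_seq EG EH S \<Longrightarrow>
    map_walk (last S) C \<simeq> inv_walk (vertex_walk EH S x) @ map_walk (hd S) C @ vertex_walk EH S y"
proof (induction S rule: induct_list012)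
  case (3 s0 s1 S)
  interpret recoloring_step EG EH s0 s1 using recoloring_step_of_seq[OF "3.prems"] .
  define P where "P = vertex_walk EH (s1 # S)"
  have "map_walk (last (s0 # s1 # S)) C \<simeq> inv_walk (P x) @ map_walk s1 C @ P y"
    using "3.IH"(2) recoloring_seq_Cons2(1)[OF "3.prems"] by (simp add: P_def)
  also have "\<dots> \<simeq> inv_walk (P x) @ (inv_walk (T x) @ map_walk s0 C @ T y) @ P y"
    by (intro homotopic_append homotopic_refl walk_homotopy assms)
  also have "\<dots> = inv_walk (T x @ P x) @ map_walk s0 C @ (T y @ P y)"
    by simp
  finally show ?case by (simp add: P_def)
qed (simp_all add: recoloring_seq_def)

end

theorem mainTheorem3:
  fixes EG :: "'v::finite \<Rightarrow> 'v \<Rightarrow> bool"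
    and EH :: "'h::finite \<Rightarrow> 'h \<Rightarrow> bool"
    and \<alpha> \<beta> :: "'v \<Rightarrow> 'h" and q :: 'v and Q :: "'h walk"
  assumes "sym_graph EG" "loopless EG" "connected_graph EG" "has_edge EG"
    and "sym_graph EH" "connected_graph EH" "has_edge EH" "mono_nbhd EH"
    and "hom EG EH \<alpha>" "hom EG EH \<beta>"
    and "Q \<in> reduced_walks EH"
    and "realizable EG EH Q \<alpha> \<beta> q"
  shows "topologically_valid EG EH Q \<alpha> \<beta> q"
proof -
  interpret recoloring_setting EG EH
    using assms(1,2,5,8) connected_has_neighbour[OF assms(3,4)] by unfold_locales
  obtain S where S: "recoloring_seq EG EH S" "hd S = \<alpha>" "last S = \<beta>"
    and Q: "red (vertex_walk EH S q) = Q"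
    using assms(12) by (auto simp: realizable_def reduce_eq_red)
  define P where "P = vertex_walk EH S q"
  have QP: "Q \<simeq> P" using Q red_homotopic[of P] by (simp add: P_def)
  have "walk EH (\<alpha> q) Q (\<beta> q)"
    using walk_red[OF vertex_walk_is_walk[OF S(1), of q]] S Q by simp
  moreover have "reduce (map_walk \<beta> C) = (inv_walk Q \<cdot> reduce (map_walk \<alpha> C)) \<cdot> Q"
    if C: "walk EG q C q" for C
  proof -
    have "(inv_walk Q \<cdot> reduce (map_walk \<alpha> C)) \<cdot> Q \<simeq> (inv_walk Q @ red (map_walk \<alpha> C)) @ Q"
      using homotopic_trans[OF wprod_homotopic homotopic_append[OF wprod_homotopic homotopic_refl]]
      by (simp add: reduce_eq_red)
    also have "\<dots> \<simeq> (inv_walk P @ map_walk \<alpha> C) @ P"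
      by (intro homotopic_append homotopic_inv_walk QP red_homotopic)
    also have "\<dots> \<simeq> map_walk \<beta> C"
      using homotopic_sym[OF vertex_walk_homotopy[OF C S(1)]] S by (simp add: P_def)
    finally show ?thesis
      by (simp add: homotopic_def wprod_def reduce_eq_red red_reduced reduced_red)
  qed
  moreover have "reduced Q" using assms(11) by (simp add: reduced_walks_def)
  ultimately show ?thesis by (simp add: topologically_valid_def)
qed

end
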